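(* Let $g\ge2$ be an integer and $\Gamma=\langle 2,2g+1\rangle$ (the numerical semigroup generated by $2$ and $2g+1$, of genus $g$). Let $G(m)=m+1-2g+E(\Gamma,2)$. Then: \begin{itemize} \item for $m=2g+2k+1$ with $k\ge0$, $\delta^2_\Gamma(m)=G(m)$; \item for $m=2g+2k$ with $0\le k\le g-2$, $\delta^2_\Gamma(m)=G(m)+1$; \item $\delta^2_\Gamma(4g-2)=2g+1=G(4g-2)$. \end{itemize}
   Context: For a numerical semigroup $\Gamma$ (subset of $\mathbb N$ containing $0$, closed under addition, finite complement) with conductor $c$ (least $c$ with $c+\mathbb N\subseteq\Gamma$) and genus $g=|\mathbb N\setminus\Gamma|$: $D_\Gamma(x)=\{s\in\Gamma:x-s\in\Gamma\}$, $\delta^2_\Gamma(m)=\min\{|D_\Gamma(m_1)\cup D_\Gamma(m_2)|: m\le m_1<m_2,\ m_i\in\Gamma\}$, and the second Feng-Rao number $E(\Gamma,2)$ is the integer with $\delta^2_\Gamma(m)=m+1-2g+E(\Gamma,2)$ for all $m\ge 2c-1$. *)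

theory Defs
  imports Main
begin

definition genus :: "nat set \<Rightarrow> nat" where
  "genus S = card (UNIV - S)"

definition conductor :: "nat set \<Rightarrow> nat" where
  "conductor S = (LEAST c. \<forall>n\<ge>c. n \<in> S)"

definition Dset :: "nat set \<Rightarrow> nat \<Rightarrow> nat set" where
  "Dset S x = {s \<in> S. s \<le> x \<and> x - s \<in> S}"

definition delta2 :: "nat set \<Rightarrow> nat \<Rightarrow> nat" where
  "delta2 S m = Inf {card (Dset S m1 \<union> Dset S m2) | m1 m2.
                     m \<le> m1 \<and> m1 < m2 \<and> m1 \<in> S \<and> m2 \<in> S}"

definition FengRao2 :: "nat set \<Rightarrow> int" where
  "FengRao2 S = (THE e. \<forall>m. 2 * conductor S - 1 \<le> m \<longrightarrow>
      int (delta2 S m) = int m + 1 - 2 * int (genus S) + e)"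

definition semigroup2 :: "nat \<Rightarrow> nat \<Rightarrow> nat set" where
  "semigroup2 a b = {i * a + j * b | i j. True}"

end

theory Submission
  imports Defs
begin

(* The semigroup generated by 2 and 2g+1 consists of all even numbers and all numbers >= 2g.
   For x in it, D(x) is an initial run of the even numbers together with an initial run of the
   odd numbers above 2g, so |D(m1) \<union> D(m2)| is the sum of the longer even run and the longer
   odd run. Minimising over m <= m1 < m2 is then elementary: delta2(m) = m + 3 - 2g, except
   for even m <= 4g - 4, where it is m + 4 - 2g. Hence E(\<Gamma>, 2) = 2. *)

definition hyperelliptic :: "nat \<Rightarrow> nat set" where
  "hyperelliptic g = {n. even n \<or> 2 * g \<le> n}"

definition evens :: "nat \<Rightarrow> nat set" where
  "evens n = (\<lambda>i. 2 * i) ` {..<n}"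

definition odds_above :: "nat \<Rightarrow> nat \<Rightarrow> nat set" where
  "odds_above g n = (\<lambda>i. 2 * g + 2 * i + 1) ` {..<n}"

lemma semigroup2_2_odd_eq_hyperelliptic: "semigroup2 2 (2 * g + 1) = hyperelliptic g"
proof (intro set_eqI iffI)
  fix n assume "n \<in> semigroup2 2 (2 * g + 1)"
  then obtain i j where n: "n = i * 2 + j * (2 * g + 1)" by (auto simp: semigroup2_def)
  show "n \<in> hyperelliptic g"
  proof (cases j)
    case (Suc j')
    then have "2 * g \<le> n" using n by simp
    then show ?thesis by (simp add: hyperelliptic_def)
  qed (simp add: n hyperelliptic_def)
next
  fix n assume n: "n \<in> hyperelliptic g"
  show "n \<in> semigroup2 2 (2 * g + 1)"
  proof (cases "even n")
    case True
    then have "n = (n div 2) * 2 + 0 * (2 * g + 1)" by simp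
    then show ?thesis unfolding semigroup2_def by blast
  next
    case False
    with n have "2 * g + 1 \<le> n" by (auto simp: hyperelliptic_def dest: le_neq_implies_less)
    with False have "n = ((n - (2 * g + 1)) div 2) * 2 + 1 * (2 * g + 1)" by presburger
    then show ?thesis unfolding semigroup2_def by blast
  qed
qed

lemma mem_evens: "s \<in> evens n \<longleftrightarrow> even s \<and> s < 2 * n"
  by (auto simp: evens_def elim!: evenE)

lemma mem_odds_above: "s \<in> odds_above g n \<longleftrightarrow> odd s \<and> 2 * g < s \<and> s < 2 * g + 2 * n"
proof
  assume "odd s \<and> 2 * g < s \<and> s < 2 * g + 2 * n"
  then have "s = 2 * g + 2 * ((s - 2 * g) div 2) + 1" "(s - 2 * g) div 2 < n" by presburger+
  then show "s \<in> odds_above g n" unfolding odds_above_def by blast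
qed (auto simp: odds_above_def)

lemma evens_Un: "evens a \<union> evens b = evens (max a b)"
  by (auto simp: mem_evens)

lemma odds_above_Un: "odds_above g a \<union> odds_above g b = odds_above g (max a b)"
  by (auto simp: mem_odds_above)

lemma card_evens: "card (evens n) = n"
  by (simp add: evens_def card_image inj_on_def)

lemma card_odds_above: "card (odds_above g n) = n"
  by (simp add: odds_above_def card_image inj_on_def)

lemma card_evens_Un_odds_above: "card (evens a \<union> odds_above g b) = a + b"
proof -
  have "finite (evens a)" "finite (odds_above g b)" by (simp_all add: evens_def odds_above_def)
  moreover have "evens a \<inter> odds_above g b = {}" by (auto simp: mem_evens mem_odds_above)
  ultimately show ?thesis by (simp add: card_Un_disjoint card_evens card_odds_above)
qed

lemma card_Un_evens_odds_above:
  "card ((evens a \<union> odds_above g b) \<union> (evens c \<union> odds_above g d)) = max a c + max b d"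
proof -
  have "(evens a \<union> odds_above g b) \<union> (evens c \<union> odds_above g d)
      = evens (max a c) \<union> odds_above g (max b d)"
    by (auto simp flip: evens_Un odds_above_Un)
  then show ?thesis by (simp add: card_evens_Un_odds_above)
qed

lemma Dset_hyperelliptic_even:
  "Dset (hyperelliptic g) (2 * a) = evens (a + 1) \<union> odds_above g (a - 2 * g)"
proof (intro set_eqI)
  fix s
  show "s \<in> Dset (hyperelliptic g) (2 * a)
          \<longleftrightarrow> s \<in> evens (a + 1) \<union> odds_above g (a - 2 * g)"
  proof (cases "even s")
    case True
    then show ?thesis by (auto simp: Dset_def hyperelliptic_def mem_evens mem_odds_above)
  next
    case False
    then obtain i where "s = 2 * i + 1" by (blast elim: oddE)
    then show ?thesis
      by (auto simp: Dset_def hyperelliptic_def mem_evens mem_odds_above) presburger+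
  qed
qed

lemma Dset_hyperelliptic_odd:
  "Dset (hyperelliptic g) (2 * g + 2 * j + 1) = evens (j + 1) \<union> odds_above g (j + 1)"
proof (intro set_eqI)
  fix s
  show "s \<in> Dset (hyperelliptic g) (2 * g + 2 * j + 1)
          \<longleftrightarrow> s \<in> evens (j + 1) \<union> odds_above g (j + 1)"
  proof (cases "even s")
    case True
    then obtain i where "s = 2 * i" by blast
    then show ?thesis by (auto simp: Dset_def hyperelliptic_def mem_evens mem_odds_above)
  next
    case False
    then obtain i where "s = 2 * i + 1" by (blast elim: oddE)
    then show ?thesis
      by (auto simp: Dset_def hyperelliptic_def mem_evens mem_odds_above) presburger+
  qed
qed

lemma hyperelliptic_cases:
  assumes "x \<in> hyperelliptic g"
  obtains a where "x = 2 * a" | j where "x = 2 * g + 2 * j + 1"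
proof (cases "even x")
  case False
  with assms have "x = 2 * g + 2 * ((x - 2 * g) div 2) + 1"
    by (simp add: hyperelliptic_def) presburger
  then show ?thesis using that(2) by blast
qed (use that(1) in blast)

lemma delta2_eqI:
  assumes "m \<le> a" "a < b" "a \<in> S" "b \<in> S" "card (Dset S a \<union> Dset S b) = d"
    and "\<And>m1 m2. m \<le> m1 \<Longrightarrow> m1 < m2 \<Longrightarrow> m1 \<in> S \<Longrightarrow> m2 \<in> S
           \<Longrightarrow> d \<le> card (Dset S m1 \<union> Dset S m2)"
  shows "delta2 S m = d"
  unfolding delta2_def by (rule cInf_eq_minimum) (use assms in blast)+

lemma delta2_bound_le:
  fixes g m B :: nat
  assumes "m + 3 \<le> B + 2 * g" "even m \<Longrightarrow> m + 4 \<le> 4 * g \<Longrightarrow> m + 4 \<le> B + 2 * g"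
  shows "(if even m \<and> m + 4 \<le> 4 * g then m + 4 - 2 * g else m + 3 - 2 * g) \<le> B"
  using assms by auto

lemma card_Un_Dset_hyperelliptic_ge:
  assumes "2 \<le> g" "2 * g \<le> m" "m \<le> m1" "m1 < m2"
    and "m1 \<in> hyperelliptic g" "m2 \<in> hyperelliptic g"
  shows "(if even m \<and> m + 4 \<le> 4 * g then m + 4 - 2 * g else m + 3 - 2 * g)
           \<le> card (Dset (hyperelliptic g) m1 \<union> Dset (hyperelliptic g) m2)"
    (is "_ \<le> ?card")
  using assms(5)
proof (cases rule: hyperelliptic_cases)
  case (1 a)
  from assms(6) show ?thesis
  proof (cases rule: hyperelliptic_cases)
    case (1 b)
    with \<open>m1 = 2 * a\<close> have "?card = max (a + 1) (b + 1) + max (a - 2 * g) (b - 2 * g)"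
      by (simp only: Dset_hyperelliptic_even card_Un_evens_odds_above)
    with \<open>m1 = 2 * a\<close> \<open>m2 = 2 * b\<close> assms(1-4) show ?thesis
      by (auto simp: max_def intro!: delta2_bound_le)
  next
    case (2 j)
    with \<open>m1 = 2 * a\<close> have "?card = max (a + 1) (j + 1) + max (a - 2 * g) (j + 1)"
      by (simp only: Dset_hyperelliptic_even Dset_hyperelliptic_odd card_Un_evens_odds_above)
    with \<open>m1 = 2 * a\<close> \<open>m2 = 2 * g + 2 * j + 1\<close> assms(1-4) show ?thesis
      by (auto simp: max_def intro!: delta2_bound_le)
  qed
next
  case (2 i)
  have m_even_le: "even m \<Longrightarrow> m \<le> 2 * g + 2 * i"
    using assms(3) \<open>m1 = 2 * g + 2 * i + 1\<close> by presburger
  from assms(6) show ?thesis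
  proof (cases rule: hyperelliptic_cases)
    case (1 b)
    with \<open>m1 = 2 * g + 2 * i + 1\<close>
    have "?card = max (i + 1) (b + 1) + max (i + 1) (b - 2 * g)"
      by (simp only: Dset_hyperelliptic_even Dset_hyperelliptic_odd card_Un_evens_odds_above)
    with \<open>m1 = 2 * g + 2 * i + 1\<close> \<open>m2 = 2 * b\<close> m_even_le assms(1-4) show ?thesis
      by (auto simp: max_def intro!: delta2_bound_le)
  next
    case (2 j)
    with \<open>m1 = 2 * g + 2 * i + 1\<close> have "?card = max (i + 1) (j + 1) + max (i + 1) (j + 1)"
      by (simp only: Dset_hyperelliptic_odd card_Un_evens_odds_above)
    with \<open>m1 = 2 * g + 2 * i + 1\<close> \<open>m2 = 2 * g + 2 * j + 1\<close> m_even_le assms(1-4)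
    show ?thesis
      by (auto simp: max_def intro!: delta2_bound_le)
  qed
qed

lemma delta2_hyperelliptic:
  assumes "2 \<le> g" "2 * g \<le> m"
  shows "delta2 (hyperelliptic g) m
           = (if even m \<and> m + 4 \<le> 4 * g then m + 4 - 2 * g else m + 3 - 2 * g)"
proof -
  let ?S = "hyperelliptic g"
  have in_S: "n \<in> ?S" if "2 * g \<le> n" for n using that by (simp add: hyperelliptic_def)
  have lower: "\<And>m1 m2. m \<le> m1 \<Longrightarrow> m1 < m2 \<Longrightarrow> m1 \<in> ?S \<Longrightarrow> m2 \<in> ?S \<Longrightarrow>
      (if even m \<and> m + 4 \<le> 4 * g then m + 4 - 2 * g else m + 3 - 2 * g)
        \<le> card (Dset ?S m1 \<union> Dset ?S m2)"
    using card_Un_Dset_hyperelliptic_ge assms by blast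
  consider (odd) j where "m = 2 * g + 2 * j + 1"
    | (even_small) a where "m = 2 * a" "a + 2 \<le> 2 * g"
    | (even_large) a where "m = 2 * a" "2 * g \<le> a + 1"
    using in_S[OF assms(2)] by (cases rule: hyperelliptic_cases) force+
  then show ?thesis
  proof cases
    case odd
    let ?a = "2 * g + 2 * j + 1" and ?b = "2 * g + 2 * (j + 1) + 1"
    have "card (Dset ?S ?a \<union> Dset ?S ?b) = m + 3 - 2 * g"
      unfolding Dset_hyperelliptic_odd card_Un_evens_odds_above using odd by simp
    with odd show ?thesis
      by (intro delta2_eqI[where a = ?a and b = ?b, OF _ _ _ _ _ lower]) (auto intro: in_S)
  next
    case even_small
    let ?a = "2 * g + 2 * (a - g) + 1" and ?b = "2 * g + 2 * (a - g + 1) + 1"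
    have "card (Dset ?S ?a \<union> Dset ?S ?b) = m + 4 - 2 * g"
      unfolding Dset_hyperelliptic_odd card_Un_evens_odds_above using even_small assms by simp
    with even_small assms show ?thesis
      by (intro delta2_eqI[where a = ?a and b = ?b, OF _ _ _ _ _ lower]) (auto intro: in_S)
  next
    case even_large
    let ?a = "2 * a" and ?b = "2 * (a + 1)"
    have "card (Dset ?S ?a \<union> Dset ?S ?b) = m + 3 - 2 * g"
      unfolding Dset_hyperelliptic_even card_Un_evens_odds_above using even_large by simp
    with even_large show ?thesis
      by (intro delta2_eqI[where a = ?a and b = ?b, OF _ _ _ _ _ lower]) (auto intro: in_S)
  qed
qed

lemma genus_hyperelliptic: "genus (hyperelliptic g) = g"
proof -
  have "UNIV - hyperelliptic g = odds_above 0 g"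
    by (auto simp: hyperelliptic_def mem_odds_above)
  then show ?thesis by (simp add: genus_def card_odds_above)
qed

lemma conductor_hyperelliptic:
  assumes "1 \<le> g"
  shows "conductor (hyperelliptic g) = 2 * g"
  unfolding conductor_def
proof (rule Least_equality)
  show "\<forall>n\<ge>2 * g. n \<in> hyperelliptic g" by (simp add: hyperelliptic_def)
next
  fix c assume "\<forall>n\<ge>c. n \<in> hyperelliptic g"
  then have "2 * g - 1 \<notin> hyperelliptic g \<longrightarrow> \<not> c \<le> 2 * g - 1" by blast
  moreover have "2 * g - 1 \<notin> hyperelliptic g" using assms by (simp add: hyperelliptic_def)
  ultimately show "2 * g \<le> c" by linarith
qed

lemma FengRao2_hyperelliptic:
  assumes "2 \<le> g"
  shows "FengRao2 (hyperelliptic g) = 2"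
proof -
  have delta2_large: "int (delta2 (hyperelliptic g) m) = int m + 1 - 2 * int g + 2"
    if "4 * g - 1 \<le> m" for m
    using delta2_hyperelliptic[OF assms, of m] that assms by auto
  have "1 \<le> g" using assms by simp
  show ?thesis
    unfolding FengRao2_def conductor_hyperelliptic[OF \<open>1 \<le> g\<close>] genus_hyperelliptic
  proof (rule the_equality)
    fix e assume "\<forall>m. 2 * (2 * g) - 1 \<le> m \<longrightarrow>
        int (delta2 (hyperelliptic g) m) = int m + 1 - 2 * int g + e"
    with delta2_large[of "4 * g - 1"] show "e = 2" by auto
  qed (use delta2_large in auto)
qed

theorem theorem5p3:
  fixes g :: nat
  assumes "g \<ge> 2"
  defines "\<Gamma> \<equiv> semigroup2 2 (2 * g + 1)"
  defines "G \<equiv> (\<lambda>m::nat. int m + 1 - 2 * int g + FengRao2 \<Gamma>)"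
  shows "(\<forall>k. int (delta2 \<Gamma> (2 * g + 2 * k + 1)) = G (2 * g + 2 * k + 1))
       \<and> (\<forall>k. k \<le> g - 2 \<longrightarrow> int (delta2 \<Gamma> (2 * g + 2 * k)) = G (2 * g + 2 * k) + 1)
       \<and> delta2 \<Gamma> (4 * g - 2) = 2 * g + 1
       \<and> int (2 * g + 1) = G (4 * g - 2)"
proof -
  have \<Gamma>: "\<Gamma> = hyperelliptic g"
    unfolding \<Gamma>_def by (rule semigroup2_2_odd_eq_hyperelliptic)
  have G: "G = (\<lambda>m. int m + 3 - 2 * int g)"
    unfolding G_def \<Gamma> FengRao2_hyperelliptic[OF assms(1)] by auto
  show ?thesis
    unfolding \<Gamma> G using delta2_hyperelliptic[OF assms(1)] assms(1) by auto
qed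

end
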